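(* Let $\mathcal A$ be a super weakly amenable Banach algebra. Then (i) the linear span of $\{ab:a,b\in\mathcal A\}$ is dense in $\mathcal A$; and (ii) there are no nonzero continuous point derivations on $\mathcal A$: for every nonzero continuous multiplicative linear functional $\varphi:\mathcal A\to\mathbb C$, every continuous linear functional $d:\mathcal A\to\mathbb C$ with $d(ab)=d(a)\varphi(b)+\varphi(a)d(b)$ for all $a,b\in\mathcal A$ is zero.
   Context: For a continuous homomorphism $\varphi:\mathcal A\to\mathcal B$ of Banach algebras, $\mathcal B_\varphi$ is $\mathcal B$ as an $\mathcal A$-bimodule with $a\cdot b=\varphi(a)b$, $b\cdot a=b\varphi(a)$, and its dual $\mathcal B_\varphi^*$ is an $\mathcal A$-bimodule via $\langle x,a\cdot f\rangle=\langle x\cdot a,f\rangle$, $\langle x,f\cdot a\rangle=\langle a\cdot x,f\rangle$. A derivation $d:\mathcal A\to X$ is a bounded linear map with $d(ab)=d(a)\cdot b+a\cdot d(b)$. $\mathcal A$ is called super weakly amenable if for every Banach algebra $\mathcal B$, every continuous homomorphism $\varphi:\mathcal A\to\mathcal B$ and every derivation $d:\mathcal A\to\mathcal B_\varphi^*$, one has $\langle d(a),\varphi(b)\rangle+\langle d(b),\varphi(a)\rangle=0$ for all $a,b\in\mathcal A$. *)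

theory Defs
  imports Complex_Main
begin

text \<open>Complex Banach algebras, rendered explicitly as structures on a carrier set
  (Isabelle/HOL has no type class of complex normed spaces).\<close>

record 'a cba =
  ba_car   :: "'a set"
  ba_zero  :: 'a
  ba_add   :: "'a \<Rightarrow> 'a \<Rightarrow> 'a"
  ba_smul  :: "complex \<Rightarrow> 'a \<Rightarrow> 'a"
  ba_mul   :: "'a \<Rightarrow> 'a \<Rightarrow> 'a"
  ba_norm  :: "'a \<Rightarrow> real"

definition ba_diff :: "'a cba \<Rightarrow> 'a \<Rightarrow> 'a \<Rightarrow> 'a" where
  "ba_diff A x y = ba_add A x (ba_smul A (-1) y)"

definition banach_algebra :: "'a cba \<Rightarrow> bool" where
  "banach_algebra A \<longleftrightarrow>
     ba_zero A \<in> ba_car A \<and>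
     (\<forall>x\<in>ba_car A. \<forall>y\<in>ba_car A. ba_add A x y \<in> ba_car A) \<and>
     (\<forall>c. \<forall>x\<in>ba_car A. ba_smul A c x \<in> ba_car A) \<and>
     (\<forall>x\<in>ba_car A. \<forall>y\<in>ba_car A. ba_mul A x y \<in> ba_car A) \<and>
     \<comment> \<open>complex vector space\<close>
     (\<forall>x\<in>ba_car A. \<forall>y\<in>ba_car A. \<forall>z\<in>ba_car A.
        ba_add A (ba_add A x y) z = ba_add A x (ba_add A y z)) \<and>
     (\<forall>x\<in>ba_car A. \<forall>y\<in>ba_car A. ba_add A x y = ba_add A y x) \<and>
     (\<forall>x\<in>ba_car A. ba_add A x (ba_zero A) = x) \<and>
     (\<forall>x\<in>ba_car A. ba_add A x (ba_smul A (-1) x) = ba_zero A) \<and>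
     (\<forall>x\<in>ba_car A. ba_smul A 1 x = x) \<and>
     (\<forall>a b. \<forall>x\<in>ba_car A. ba_smul A a (ba_smul A b x) = ba_smul A (a * b) x) \<and>
     (\<forall>a b. \<forall>x\<in>ba_car A. ba_smul A (a + b) x = ba_add A (ba_smul A a x) (ba_smul A b x)) \<and>
     (\<forall>a. \<forall>x\<in>ba_car A. \<forall>y\<in>ba_car A.
        ba_smul A a (ba_add A x y) = ba_add A (ba_smul A a x) (ba_smul A a y)) \<and>
     \<comment> \<open>associative algebra\<close>
     (\<forall>x\<in>ba_car A. \<forall>y\<in>ba_car A. \<forall>z\<in>ba_car A.
        ba_mul A (ba_mul A x y) z = ba_mul A x (ba_mul A y z)) \<and>
     (\<forall>x\<in>ba_car A. \<forall>y\<in>ba_car A. \<forall>z\<in>ba_car A.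
        ba_mul A x (ba_add A y z) = ba_add A (ba_mul A x y) (ba_mul A x z)) \<and>
     (\<forall>x\<in>ba_car A. \<forall>y\<in>ba_car A. \<forall>z\<in>ba_car A.
        ba_mul A (ba_add A x y) z = ba_add A (ba_mul A x z) (ba_mul A y z)) \<and>
     (\<forall>a. \<forall>x\<in>ba_car A. \<forall>y\<in>ba_car A.
        ba_mul A (ba_smul A a x) y = ba_smul A a (ba_mul A x y) \<and>
        ba_mul A x (ba_smul A a y) = ba_smul A a (ba_mul A x y)) \<and>
     \<comment> \<open>submultiplicative norm\<close>
     (\<forall>x\<in>ba_car A. 0 \<le> ba_norm A x) \<and>
     (\<forall>x\<in>ba_car A. ba_norm A x = 0 \<longleftrightarrow> x = ba_zero A) \<and>
     (\<forall>x\<in>ba_car A. \<forall>y\<in>ba_car A. ba_norm A (ba_add A x y) \<le> ba_norm A x + ba_norm A y) \<and>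
     (\<forall>a. \<forall>x\<in>ba_car A. ba_norm A (ba_smul A a x) = cmod a * ba_norm A x) \<and>
     (\<forall>x\<in>ba_car A. \<forall>y\<in>ba_car A. ba_norm A (ba_mul A x y) \<le> ba_norm A x * ba_norm A y) \<and>
     \<comment> \<open>completeness\<close>
     (\<forall>f. (\<forall>n::nat. f n \<in> ba_car A) \<and>
          (\<forall>e>0. \<exists>N. \<forall>m\<ge>N. \<forall>n\<ge>N. ba_norm A (ba_diff A (f m) (f n)) < e) \<longrightarrow>
          (\<exists>l\<in>ba_car A. \<forall>e>0. \<exists>N. \<forall>n\<ge>N. ba_norm A (ba_diff A (f n) l) < e))"

definition cont_functional :: "'a cba \<Rightarrow> ('a \<Rightarrow> complex) \<Rightarrow> bool" where
  "cont_functional A f \<longleftrightarrow>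
     (\<forall>x\<in>ba_car A. \<forall>y\<in>ba_car A. f (ba_add A x y) = f x + f y) \<and>
     (\<forall>c. \<forall>x\<in>ba_car A. f (ba_smul A c x) = c * f x) \<and>
     (\<exists>K. \<forall>x\<in>ba_car A. cmod (f x) \<le> K * ba_norm A x)"

definition cont_hom :: "'a cba \<Rightarrow> 'b cba \<Rightarrow> ('a \<Rightarrow> 'b) \<Rightarrow> bool" where
  "cont_hom A B \<phi> \<longleftrightarrow>
     (\<forall>x\<in>ba_car A. \<phi> x \<in> ba_car B) \<and>
     (\<forall>x\<in>ba_car A. \<forall>y\<in>ba_car A. \<phi> (ba_add A x y) = ba_add B (\<phi> x) (\<phi> y)) \<and>
     (\<forall>c. \<forall>x\<in>ba_car A. \<phi> (ba_smul A c x) = ba_smul B c (\<phi> x)) \<and>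
     (\<forall>x\<in>ba_car A. \<forall>y\<in>ba_car A. \<phi> (ba_mul A x y) = ba_mul B (\<phi> x) (\<phi> y)) \<and>
     (\<exists>K. \<forall>x\<in>ba_car A. ba_norm B (\<phi> x) \<le> K * ba_norm A x)"

text \<open>Derivations \<open>d : A \<rightarrow> B_\<phi>^*\<close>; elements of the dual \<open>B^*\<close> are represented by
  continuous linear functionals \<open>'b \<Rightarrow> complex\<close> (only their values on the carrier matter).
  The module actions are \<open>\<langle>x, f\<cdot>a\<rangle> = \<langle>\<phi>(a) x, f\<rangle>\<close> and \<open>\<langle>x, a\<cdot>f\<rangle> = \<langle>x \<phi>(a), f\<rangle>\<close>.\<close>
definition dual_derivation ::
    "'a cba \<Rightarrow> 'b cba \<Rightarrow> ('a \<Rightarrow> 'b) \<Rightarrow> ('a \<Rightarrow> 'b \<Rightarrow> complex) \<Rightarrow> bool" where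
  "dual_derivation A B \<phi> d \<longleftrightarrow>
     (\<forall>a\<in>ba_car A. cont_functional B (d a)) \<and>
     (\<forall>a\<in>ba_car A. \<forall>b\<in>ba_car A. \<forall>x\<in>ba_car B. d (ba_add A a b) x = d a x + d b x) \<and>
     (\<forall>c. \<forall>a\<in>ba_car A. \<forall>x\<in>ba_car B. d (ba_smul A c a) x = c * d a x) \<and>
     (\<exists>K. \<forall>a\<in>ba_car A. \<forall>x\<in>ba_car B. cmod (d a x) \<le> K * ba_norm A a * ba_norm B x) \<and>
     (\<forall>a\<in>ba_car A. \<forall>b\<in>ba_car A. \<forall>x\<in>ba_car B.
        d (ba_mul A a b) x = d a (ba_mul B (\<phi> b) x) + d b (ba_mul B x (\<phi> a)))"

text \<open>Super weak amenability.  The Banach algebras \<open>B\<close> range over all Banach algebra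
  structures whose carrier lies in the same HOL type as that of \<open>A\<close>.\<close>
definition super_weakly_amenable :: "'a cba \<Rightarrow> bool" where
  "super_weakly_amenable A \<longleftrightarrow>
     (\<forall>(B::'a cba). \<forall>\<phi> d. banach_algebra B \<and> cont_hom A B \<phi> \<and> dual_derivation A B \<phi> d \<longrightarrow>
        (\<forall>a\<in>ba_car A. \<forall>b\<in>ba_car A. d a (\<phi> b) + d b (\<phi> a) = 0))"

inductive_set prod_span :: "'a cba \<Rightarrow> 'a set" for A :: "'a cba" where
  zero: "ba_zero A \<in> prod_span A"
| prod: "a \<in> ba_car A \<Longrightarrow> b \<in> ba_car A \<Longrightarrow> ba_mul A a b \<in> prod_span A"
| add: "x \<in> prod_span A \<Longrightarrow> y \<in> prod_span A \<Longrightarrow> ba_add A x y \<in> prod_span A"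
| smul: "x \<in> prod_span A \<Longrightarrow> ba_smul A c x \<in> prod_span A"

definition dense_in :: "'a cba \<Rightarrow> 'a set \<Rightarrow> bool" where
  "dense_in A S \<longleftrightarrow>
     (\<forall>x\<in>ba_car A. \<forall>e>0. \<exists>y\<in>S. ba_norm A (ba_diff A x y) < e)"

end

theory Submission
  imports Defs
begin

text \<open>If \<open>u, v\<close> are continuous
  functionals with \<open>u(ab) v(x) = u(a) v(bx) + u(b) v(xa)\<close>, then \<open>a \<mapsto> u(a) v(\<cdot>)\<close> is a
  derivation \<open>A \<rightarrow> A\<^sup>*\<close>, so super weak amenability gives \<open>u(a) v(b) + u(b) v(a) = 0\<close>.
  (i) If the products did not span a dense subspace, Hahn--Banach would give a continuous
  functional \<open>f \<noteq> 0\<close> killing all products; \<open>u = v = f\<close> then yields \<open>2 f(x)\<^sup>2 = 0\<close>.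
  (ii) For a point derivation \<open>d\<close> at \<open>\<phi>\<close> take \<open>u = d\<close>, \<open>v = \<phi>\<close>: with \<open>\<phi>(w) \<noteq> 0\<close> we get
  \<open>d(w) = 0\<close> and then \<open>d(a) \<phi>(w) = 0\<close> for all \<open>a\<close>.
  Hahn--Banach itself is obtained from Zorn's lemma for norm-dominated real-linear functionals,
  followed by complexification \<open>f(x) = g(x) - i g(ix)\<close>.\<close>

locale cnormed_space =
  fixes A :: "'a cba"
  assumes vzero_closed: "ba_zero A \<in> ba_car A"
    and vadd_closed: "x \<in> ba_car A \<Longrightarrow> y \<in> ba_car A \<Longrightarrow> ba_add A x y \<in> ba_car A"
    and vscale_closed: "x \<in> ba_car A \<Longrightarrow> ba_smul A c x \<in> ba_car A"
    and vadd_assoc: "x \<in> ba_car A \<Longrightarrow> y \<in> ba_car A \<Longrightarrow> z \<in> ba_car A \<Longrightarrow>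
      ba_add A (ba_add A x y) z = ba_add A x (ba_add A y z)"
    and vadd_commute: "x \<in> ba_car A \<Longrightarrow> y \<in> ba_car A \<Longrightarrow> ba_add A x y = ba_add A y x"
    and vadd_vzero: "x \<in> ba_car A \<Longrightarrow> ba_add A x (ba_zero A) = x"
    and vadd_vneg: "x \<in> ba_car A \<Longrightarrow> ba_add A x (ba_smul A (-1) x) = ba_zero A"
    and vscale_one: "x \<in> ba_car A \<Longrightarrow> ba_smul A 1 x = x"
    and vscale_vscale: "x \<in> ba_car A \<Longrightarrow> ba_smul A a (ba_smul A b x) = ba_smul A (a * b) x"
    and vscale_left_distrib: "x \<in> ba_car A \<Longrightarrow>
      ba_smul A (a + b) x = ba_add A (ba_smul A a x) (ba_smul A b x)"
    and vscale_right_distrib: "x \<in> ba_car A \<Longrightarrow> y \<in> ba_car A \<Longrightarrow>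
      ba_smul A a (ba_add A x y) = ba_add A (ba_smul A a x) (ba_smul A a y)"
    and vnorm_nonneg: "x \<in> ba_car A \<Longrightarrow> 0 \<le> ba_norm A x"
    and vnorm_eq_zero: "x \<in> ba_car A \<Longrightarrow> ba_norm A x = 0 \<longleftrightarrow> x = ba_zero A"
    and vnorm_triangle: "x \<in> ba_car A \<Longrightarrow> y \<in> ba_car A \<Longrightarrow>
      ba_norm A (ba_add A x y) \<le> ba_norm A x + ba_norm A y"
    and vnorm_vscale: "x \<in> ba_car A \<Longrightarrow> ba_norm A (ba_smul A a x) = cmod a * ba_norm A x"

lemma banach_algebra_cnormed_space: "banach_algebra A \<Longrightarrow> cnormed_space A"
  unfolding banach_algebra_def by unfold_locales auto

context cnormed_space
begin

abbreviation "V \<equiv> ba_car A"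
abbreviation "vadd \<equiv> ba_add A"
abbreviation "vscale \<equiv> ba_smul A"
abbreviation "vzero \<equiv> ba_zero A"
abbreviation "vnorm \<equiv> ba_norm A"

declare vzero_closed [simp] vadd_closed [simp] vscale_closed [simp] vadd_vzero [simp]
  vscale_one [simp] vscale_vscale [simp] vnorm_nonneg [simp]

lemma vadd_left_commute:
  "x \<in> V \<Longrightarrow> y \<in> V \<Longrightarrow> z \<in> V \<Longrightarrow> vadd x (vadd y z) = vadd y (vadd x z)"
  by (metis vadd_assoc vadd_commute)

lemmas vadd_ac = vadd_assoc vadd_commute vadd_left_commute

lemma vzero_vadd [simp]: "x \<in> V \<Longrightarrow> vadd vzero x = x"
  by (metis vadd_commute vadd_vzero vzero_closed)

lemma vscale_zero [simp]:
  assumes x: "x \<in> V"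
  shows "vscale 0 x = vzero"
proof -
  let ?y = "vscale 0 x"
  have idem: "vadd ?y ?y = ?y" using vscale_left_distrib[OF x, of 0 0] by simp
  have "vzero = vadd ?y (vscale (-1) ?y)" using x by (metis vadd_vneg vscale_closed)
  also have "\<dots> = vadd (vadd ?y ?y) (vscale (-1) ?y)" using idem by simp
  also have "\<dots> = vadd ?y (vadd ?y (vscale (-1) ?y))" using x by (simp add: vadd_assoc)
  also have "\<dots> = ?y" using x by (metis vadd_vneg vadd_vzero vscale_closed)
  finally show ?thesis by simp
qed

lemma vnorm_vzero [simp]: "vnorm vzero = 0"
  by (simp add: vnorm_eq_zero)

lemma vscale_combine: "x \<in> V \<Longrightarrow> vadd (vscale a x) (vscale b x) = vscale (a + b) x"
  by (simp add: vscale_left_distrib)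

lemma eq_of_vdiff_eq_vzero:
  assumes x: "x \<in> V" and x': "x' \<in> V" and diff: "vadd x' (vscale (-1) x) = vzero"
  shows "x' = x"
proof -
  have "x' = vadd x' (vadd (vscale (-1) x) x)" using x x' vadd_vneg[OF x] by (simp add: vadd_commute)
  also have "\<dots> = vadd (vadd x' (vscale (-1) x)) x" using x x' by (simp add: vadd_assoc)
  also have "\<dots> = x" using diff x by simp
  finally show ?thesis .
qed

lemma vscale_diff_of_vadd_eq:
  assumes x: "x \<in> V" and x': "x' \<in> V" and y: "y \<in> V"
    and eq: "vadd x (vscale a y) = vadd x' (vscale b y)"
  shows "vscale (a - b) y = vadd x' (vscale (-1) x)"
proof -
  let ?w = "vadd (vscale (-1) x) (vscale (-b) y)"
  have "vadd (vadd x (vscale a y)) ?w = vadd (vadd x (vscale (-1) x)) (vadd (vscale a y) (vscale (-b) y))"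
    using x y by (simp add: vadd_ac)
  also have "\<dots> = vscale (a - b) y" using x y by (simp add: vadd_vneg vscale_combine)
  finally have lhs: "vadd (vadd x (vscale a y)) ?w = vscale (a - b) y" .
  have "vadd (vadd x' (vscale b y)) ?w = vadd (vadd x' (vscale (-1) x)) (vadd (vscale b y) (vscale (-b) y))"
    using x x' y by (simp add: vadd_ac)
  also have "\<dots> = vadd x' (vscale (-1) x)" using x x' y by (simp add: vscale_combine)
  finally have rhs: "vadd (vadd x' (vscale b y)) ?w = vadd x' (vscale (-1) x)" .
  show ?thesis using lhs rhs eq by simp
qed

text \<open>A real-linear functional on a real subspace of \<open>V\<close> is represented by its graph, so
  that the union of a chain of such functionals is again one.\<close>

definition dominated_graph :: "('a \<times> real) set \<Rightarrow> bool" where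
  "dominated_graph G \<longleftrightarrow> (vzero, 0) \<in> G \<and>
     (\<forall>x a. (x, a) \<in> G \<longrightarrow> x \<in> V \<and> a \<le> vnorm x) \<and>
     (\<forall>x a a'. (x, a) \<in> G \<longrightarrow> (x, a') \<in> G \<longrightarrow> a = a') \<and>
     (\<forall>x a x' a'. (x, a) \<in> G \<longrightarrow> (x', a') \<in> G \<longrightarrow> (vadd x x', a + a') \<in> G) \<and>
     (\<forall>x a r. (x, a) \<in> G \<longrightarrow> (vscale (of_real r) x, r * a) \<in> G)"

lemma dominated_graphD:
  assumes "dominated_graph G"
  shows "(vzero, 0) \<in> G" "(x, a) \<in> G \<Longrightarrow> x \<in> V" "(x, a) \<in> G \<Longrightarrow> a \<le> vnorm x"
    "(x, a) \<in> G \<Longrightarrow> (x, a') \<in> G \<Longrightarrow> a = a'"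
    "(x, a) \<in> G \<Longrightarrow> (x', a') \<in> G \<Longrightarrow> (vadd x x', a + a') \<in> G"
    "(x, a) \<in> G \<Longrightarrow> (vscale (of_real r) x, r * a) \<in> G"
  using assms unfolding dominated_graph_def by blast+

definition graph_extend :: "('a \<times> real) set \<Rightarrow> 'a \<Rightarrow> real \<Rightarrow> ('a \<times> real) set" where
  "graph_extend G y c = {(vadd x (vscale (of_real t) y), a + t * c) | x a t. (x, a) \<in> G}"

lemma graph_extend_coordinates_unique:
  assumes G: "dominated_graph G" and y: "y \<in> V" and y_new: "\<forall>a. (y, a) \<notin> G"
    and xa: "(x, a) \<in> G" and xa': "(x', a') \<in> G"
    and eq: "vadd x (vscale (of_real t) y) = vadd x' (vscale (of_real t') y)"
  shows "t = t' \<and> x = x'"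
proof -
  have x: "x \<in> V" and x': "x' \<in> V" using xa xa' dominated_graphD(2)[OF G] by auto
  have diff: "vscale (of_real t - of_real t') y = vadd x' (vscale (-1) x)"
    using vscale_diff_of_vadd_eq[OF x x' y eq] by simp
  have diff_in: "(vadd x' (vscale (-1) x), a' + (-1) * a) \<in> G"
    using dominated_graphD(5,6)[OF G] xa xa' by (metis of_real_1 of_real_minus)
  have "t = t'"
  proof (rule ccontr)
    assume "t \<noteq> t'"
    then have "of_real (1 / (t - t')) * (of_real t - of_real t') = (1::complex)"
      by (simp add: field_simps flip: of_real_diff)
    then have "y = vscale (of_real (1 / (t - t'))) (vadd x' (vscale (-1) x))"
      using y by (simp flip: diff)
    then have "(y, (1 / (t - t')) * (a' + (-1) * a)) \<in> G"
      using dominated_graphD(6)[OF G diff_in, of "1 / (t - t')"] by (simp only:)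
    then show False using y_new by blast
  qed
  moreover have "x' = x"
    using \<open>t = t'\<close> diff y by (intro eq_of_vdiff_eq_vzero[OF x x']) simp
  ultimately show ?thesis by simp
qed

lemma subset_graph_extend:
  assumes G: "dominated_graph G" and y: "y \<in> V"
  shows "G \<subseteq> graph_extend G y c"
proof
  fix p assume p: "p \<in> G"
  obtain x a where "p = (x, a)" by (cases p)
  with p G y have "p = (vadd x (vscale (of_real 0) y), a + 0 * c) \<and> (x, a) \<in> G"
    by (auto dest: dominated_graphD(2))
  then show "p \<in> graph_extend G y c" unfolding graph_extend_def by blast
qed

lemma graph_extend_mem:
  assumes G: "dominated_graph G" and y: "y \<in> V"
  shows "(y, c) \<in> graph_extend G y c"
proof -
  have "(y, c) = (vadd vzero (vscale (of_real 1) y), 0 + 1 * c)" using y by simp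
  then show ?thesis unfolding graph_extend_def using dominated_graphD(1)[OF G] by blast
qed

lemma graph_extend_vadd:
  assumes G: "dominated_graph G" and y: "y \<in> V"
    and "(w, b) \<in> graph_extend G y c" "(w', b') \<in> graph_extend G y c"
  shows "(vadd w w', b + b') \<in> graph_extend G y c"
proof -
  obtain x a t x' a' t' where
    xa: "(x, a) \<in> G" "w = vadd x (vscale (of_real t) y)" "b = a + t * c" and
    xa': "(x', a') \<in> G" "w' = vadd x' (vscale (of_real t') y)" "b' = a' + t' * c"
    using assms(3,4) unfolding graph_extend_def by blast
  have x: "x \<in> V" and x': "x' \<in> V" using xa xa' dominated_graphD(2)[OF G] by auto
  have "vadd w w' = vadd (vadd x x') (vadd (vscale (of_real t) y) (vscale (of_real t') y))"
    using xa xa' x x' y by (simp add: vadd_ac)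
  also have "\<dots> = vadd (vadd x x') (vscale (of_real (t + t')) y)"
    using y by (simp add: vscale_combine)
  finally have "(vadd w w', b + b') =
      (vadd (vadd x x') (vscale (of_real (t + t')) y), (a + a') + (t + t') * c)"
    using xa xa' by (simp add: algebra_simps)
  moreover have "(vadd x x', a + a') \<in> G" using dominated_graphD(5)[OF G] xa xa' by blast
  ultimately show ?thesis unfolding graph_extend_def by blast
qed

lemma graph_extend_vscale:
  assumes G: "dominated_graph G" and y: "y \<in> V" and "(w, b) \<in> graph_extend G y c"
  shows "(vscale (of_real r) w, r * b) \<in> graph_extend G y c"
proof -
  obtain x a t where xa: "(x, a) \<in> G" "w = vadd x (vscale (of_real t) y)" "b = a + t * c"
    using assms(3) unfolding graph_extend_def by blast
  have x: "x \<in> V" using xa dominated_graphD(2)[OF G] by auto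
  have "(vscale (of_real r) w, r * b) =
      (vadd (vscale (of_real r) x) (vscale (of_real (r * t)) y), r * a + (r * t) * c)"
    using xa x y by (simp add: vscale_right_distrib algebra_simps)
  moreover have "(vscale (of_real r) x, r * a) \<in> G" using dominated_graphD(6)[OF G] xa by blast
  ultimately show ?thesis unfolding graph_extend_def by blast
qed

lemma dominated_graph_extend:
  assumes G: "dominated_graph G" and y: "y \<in> V" and y_new: "\<forall>a. (y, a) \<notin> G"
    and dominated: "\<forall>x a t. (x, a) \<in> G \<longrightarrow> a + t * c \<le> vnorm (vadd x (vscale (of_real t) y))"
  shows "dominated_graph (graph_extend G y c)"
  unfolding dominated_graph_def
proof (intro conjI allI impI)
  show "(vzero, 0) \<in> graph_extend G y c"
    using subset_graph_extend[OF G y] dominated_graphD(1)[OF G] by blast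
next
  fix w b assume "(w, b) \<in> graph_extend G y c"
  then show "w \<in> V" unfolding graph_extend_def using G y by (auto dest: dominated_graphD(2))
next
  fix w b assume "(w, b) \<in> graph_extend G y c"
  then obtain x a t where "(x, a) \<in> G" "w = vadd x (vscale (of_real t) y)" "b = a + t * c"
    unfolding graph_extend_def by blast
  then show "b \<le> vnorm w" using dominated by blast
next
  fix w b b' assume "(w, b) \<in> graph_extend G y c" "(w, b') \<in> graph_extend G y c"
  then obtain x a t x' a' t' where
    xa: "(x, a) \<in> G" "w = vadd x (vscale (of_real t) y)" "b = a + t * c" and
    xa': "(x', a') \<in> G" "w = vadd x' (vscale (of_real t') y)" "b' = a' + t' * c"
    unfolding graph_extend_def by blast
  then have "t = t' \<and> x = x'"
    by (intro graph_extend_coordinates_unique[OF G y y_new xa(1) xa'(1)]) simp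
  then show "b = b'" using dominated_graphD(4)[OF G] xa xa' by auto
next
  fix w b w' b' assume "(w, b) \<in> graph_extend G y c" "(w', b') \<in> graph_extend G y c"
  then show "(vadd w w', b + b') \<in> graph_extend G y c" by (rule graph_extend_vadd[OF G y])
next
  fix w b r assume "(w, b) \<in> graph_extend G y c"
  then show "(vscale (of_real r) w, r * b) \<in> graph_extend G y c" by (rule graph_extend_vscale[OF G y])
qed

text \<open>The classical choice of the value at the new vector: any \<open>c\<close> between
  \<open>sup (a - \<parallel>x - y\<parallel>)\<close> and \<open>inf (\<parallel>x + y\<parallel> - a)\<close>, which are in the right order by the
  triangle inequality.\<close>

lemma extension_constant_exists:
  assumes G: "dominated_graph G" and y: "y \<in> V"
  obtains c where
    "\<And>x a. (x, a) \<in> G \<Longrightarrow> a - vnorm (vadd x (vscale (-1) y)) \<le> c"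
    "\<And>x a. (x, a) \<in> G \<Longrightarrow> c \<le> vnorm (vadd x y) - a"
proof -
  have gap: "a' - vnorm (vadd x' (vscale (-1) y)) \<le> vnorm (vadd x y) - a"
    if xa: "(x, a) \<in> G" and xa': "(x', a') \<in> G" for x a x' a'
  proof -
    have x: "x \<in> V" and x': "x' \<in> V" using xa xa' dominated_graphD(2)[OF G] by auto
    have "a + a' \<le> vnorm (vadd x x')" using dominated_graphD(3,5)[OF G] xa xa' by blast
    also have "vadd x x' = vadd (vadd x y) (vadd x' (vscale (-1) y))"
    proof -
      have "vadd (vadd x y) (vadd x' (vscale (-1) y)) = vadd (vadd x x') (vadd y (vscale (-1) y))"
        using x x' y by (simp add: vadd_ac)
      then show ?thesis using x x' y by (simp add: vadd_vneg)
    qed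
    also have "vnorm \<dots> \<le> vnorm (vadd x y) + vnorm (vadd x' (vscale (-1) y))"
      using x x' y by (simp add: vnorm_triangle)
    finally show ?thesis by simp
  qed
  define T where "T = {a - vnorm (vadd x (vscale (-1) y)) | x a. (x, a) \<in> G}"
  have "T \<noteq> {}" unfolding T_def using dominated_graphD(1)[OF G] by blast
  moreover have "bdd_above T"
    unfolding bdd_above_def T_def using gap[OF dominated_graphD(1)[OF G]] by blast
  ultimately show ?thesis
    by (intro that[of "Sup T"]) (auto intro: cSup_upper cSup_least simp: T_def gap)
qed

lemma extension_constant_dominates:
  assumes G: "dominated_graph G" and y: "y \<in> V"
    and lower: "\<And>x a. (x, a) \<in> G \<Longrightarrow> a - vnorm (vadd x (vscale (-1) y)) \<le> c"
    and upper: "\<And>x a. (x, a) \<in> G \<Longrightarrow> c \<le> vnorm (vadd x y) - a"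
    and xa: "(x, a) \<in> G"
  shows "a + t * c \<le> vnorm (vadd x (vscale (of_real t) y))"
proof -
  have x: "x \<in> V" using xa dominated_graphD(2)[OF G] by auto
  have scaled: "(vscale (of_real (1 / s)) x, (1 / s) * a) \<in> G" for s
    using dominated_graphD(6)[OF G xa] .
  consider "t = 0" | "t > 0" | "t < 0" by linarith
  then show ?thesis
  proof cases
    case 1
    then show ?thesis using dominated_graphD(3)[OF G xa] x y by simp
  next
    case 2
    have "t * c \<le> t * vnorm (vadd (vscale (of_real (1 / t)) x) y) - a"
      using upper[OF scaled[of t]] 2 by (simp add: field_simps)
    also have "t * vnorm (vadd (vscale (of_real (1 / t)) x) y) =
        vnorm (vscale (of_real t) (vadd (vscale (of_real (1 / t)) x) y))"
      using 2 x y by (simp add: vnorm_vscale)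
    also have "vscale (of_real t) (vadd (vscale (of_real (1 / t)) x) y) = vadd x (vscale (of_real t) y)"
      using 2 x y by (simp add: vscale_right_distrib flip: of_real_mult)
    finally show ?thesis by simp
  next
    case 3
    define s where "s = - t"
    have s: "s > 0" using 3 s_def by simp
    have "a - s * vnorm (vadd (vscale (of_real (1 / s)) x) (vscale (-1) y)) \<le> s * c"
      using lower[OF scaled[of s]] s by (simp add: field_simps)
    also have "s * vnorm (vadd (vscale (of_real (1 / s)) x) (vscale (-1) y)) =
        vnorm (vscale (of_real s) (vadd (vscale (of_real (1 / s)) x) (vscale (-1) y)))"
      using s x y by (simp add: vnorm_vscale)
    also have "vscale (of_real s) (vadd (vscale (of_real (1 / s)) x) (vscale (-1) y)) =
        vadd x (vscale (of_real t) y)"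
      using s x y by (simp add: vscale_right_distrib s_def flip: of_real_mult)
    finally show ?thesis using s_def by simp
  qed
qed

lemma dominated_graph_Union_chain:
  assumes "C \<noteq> {}" and chain: "\<And>X Y. X \<in> C \<Longrightarrow> Y \<in> C \<Longrightarrow> X \<subseteq> Y \<or> Y \<subseteq> X"
    and dom: "\<And>X. X \<in> C \<Longrightarrow> dominated_graph X"
  shows "dominated_graph (\<Union>C)"
  unfolding dominated_graph_def
proof (intro conjI allI impI)
  obtain X0 where "X0 \<in> C" using assms(1) by blast
  then show "(vzero, 0) \<in> \<Union>C" using dominated_graphD(1)[OF dom] by blast
next
  fix x a assume "(x, a) \<in> \<Union>C"
  then show "x \<in> V" using dominated_graphD(2)[OF dom] by blast
next
  fix x a assume "(x, a) \<in> \<Union>C"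
  then show "a \<le> vnorm x" using dominated_graphD(3)[OF dom] by blast
next
  fix x a a' assume "(x, a) \<in> \<Union>C" "(x, a') \<in> \<Union>C"
  then obtain X Y where "X \<in> C" "Y \<in> C" "(x, a) \<in> X" "(x, a') \<in> Y" by blast
  then obtain Z where "Z \<in> C" "(x, a) \<in> Z" "(x, a') \<in> Z" using chain[of X Y] by blast
  then show "a = a'" using dominated_graphD(4)[OF dom] by blast
next
  fix x a x' a' assume "(x, a) \<in> \<Union>C" "(x', a') \<in> \<Union>C"
  then obtain X Y where "X \<in> C" "Y \<in> C" "(x, a) \<in> X" "(x', a') \<in> Y" by blast
  then obtain Z where "Z \<in> C" "(x, a) \<in> Z" "(x', a') \<in> Z" using chain[of X Y] by blast
  then show "(vadd x x', a + a') \<in> \<Union>C" using dominated_graphD(5)[OF dom] by blast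
next
  fix x a r assume "(x, a) \<in> \<Union>C"
  then obtain X where "X \<in> C" "(x, a) \<in> X" by blast
  then show "(vscale (of_real r) x, r * a) \<in> \<Union>C" using dominated_graphD(6)[OF dom] by blast
qed

lemma dominated_graph_maximal_extension:
  assumes G0: "dominated_graph G0"
  obtains M where "dominated_graph M" "G0 \<subseteq> M"
    "\<And>X. dominated_graph X \<Longrightarrow> M \<subseteq> X \<Longrightarrow> X = M"
proof -
  define F where "F = {G. dominated_graph G \<and> G0 \<subseteq> G}"
  have "\<exists>M\<in>F. \<forall>X\<in>F. M \<subseteq> X \<longrightarrow> X = M"
  proof (rule subset_Zorn_nonempty)
    show "F \<noteq> {}" using G0 F_def by blast
  next
    fix C assume C: "C \<noteq> {}" "subset.chain F C"
    then have CF: "C \<subseteq> F" and chain: "\<And>X Y. X \<in> C \<Longrightarrow> Y \<in> C \<Longrightarrow> X \<subseteq> Y \<or> Y \<subseteq> X"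
      by (auto simp: subset.chain_def)
    have "dominated_graph (\<Union>C)"
    proof (rule dominated_graph_Union_chain[OF C(1) chain])
      show "dominated_graph X" if "X \<in> C" for X using CF F_def that by blast
    qed
    moreover have "G0 \<subseteq> \<Union>C" using C(1) CF F_def by blast
    ultimately show "\<Union>C \<in> F" unfolding F_def by blast
  qed
  then obtain M where M: "M \<in> F" and maximal: "\<forall>X\<in>F. M \<subseteq> X \<longrightarrow> X = M" by blast
  show ?thesis
  proof (rule that)
    show "dominated_graph M" "G0 \<subseteq> M" using M unfolding F_def by auto
    show "X = M" if "dominated_graph X" "M \<subseteq> X" for X
      using maximal that \<open>G0 \<subseteq> M\<close> unfolding F_def by blast
  qed
qed

lemma dominated_graph_total_extension:
  assumes G0: "dominated_graph G0"
  obtains G where "dominated_graph G" "G0 \<subseteq> G" "\<And>y. y \<in> V \<Longrightarrow> \<exists>a. (y, a) \<in> G"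
proof -
  obtain M where M: "dominated_graph M" "G0 \<subseteq> M"
    and maximal: "\<And>X. dominated_graph X \<Longrightarrow> M \<subseteq> X \<Longrightarrow> X = M"
    using dominated_graph_maximal_extension[OF G0] by blast
  have "\<exists>a. (y, a) \<in> M" if y: "y \<in> V" for y
  proof (rule ccontr)
    assume "\<nexists>a. (y, a) \<in> M"
    then have y_new: "\<forall>a. (y, a) \<notin> M" by blast
    obtain c where
      "\<And>x a. (x, a) \<in> M \<Longrightarrow> a - vnorm (vadd x (vscale (-1) y)) \<le> c"
      "\<And>x a. (x, a) \<in> M \<Longrightarrow> c \<le> vnorm (vadd x y) - a"
      using extension_constant_exists[OF M(1) y] by metis
    then have "\<forall>x a t. (x, a) \<in> M \<longrightarrow> a + t * c \<le> vnorm (vadd x (vscale (of_real t) y))"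
      using extension_constant_dominates[OF M(1) y] by blast
    then have "graph_extend M y c = M"
      by (intro maximal dominated_graph_extend[OF M(1) y y_new] subset_graph_extend[OF M(1) y])
    then show False using graph_extend_mem[OF M(1) y, of c] y_new by simp
  qed
  with M show ?thesis using that by blast
qed

lemma real_hahn_banach:
  assumes "dominated_graph G0"
  obtains g :: "'a \<Rightarrow> real" where
    "\<And>x y. x \<in> V \<Longrightarrow> y \<in> V \<Longrightarrow> g (vadd x y) = g x + g y"
    "\<And>r x. x \<in> V \<Longrightarrow> g (vscale (of_real r) x) = r * g x"
    "\<And>x. x \<in> V \<Longrightarrow> g x \<le> vnorm x"
    "\<And>x a. (x, a) \<in> G0 \<Longrightarrow> g x = a"
proof -
  obtain G where G: "dominated_graph G" "G0 \<subseteq> G" and total: "\<And>y. y \<in> V \<Longrightarrow> \<exists>a. (y, a) \<in> G"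
    using dominated_graph_total_extension[OF assms] by metis
  define g where "g y = (SOME a. (y, a) \<in> G)" for y
  have g_graph: "(y, g y) \<in> G" if "y \<in> V" for y
    unfolding g_def using total[OF that] by (rule someI_ex)
  have g_eq: "g y = a" if "(y, a) \<in> G" for y a
    using g_graph dominated_graphD(2,4)[OF G(1)] that by metis
  show ?thesis
  proof (rule that)
    show "g (vadd x y) = g x + g y" if "x \<in> V" "y \<in> V" for x y
      using g_eq g_graph dominated_graphD(5)[OF G(1)] that by metis
    show "g (vscale (of_real r) x) = r * g x" if "x \<in> V" for r x
      using g_eq g_graph dominated_graphD(6)[OF G(1)] that by metis
    show "g x \<le> vnorm x" if "x \<in> V" for x
      using g_graph dominated_graphD(3)[OF G(1)] that by metis
    show "g x = a" if "(x, a) \<in> G0" for x a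
      using g_eq G(2) that by blast
  qed
qed

lemma abs_le_vnorm_of_dominated:
  fixes g :: "'a \<Rightarrow> real"
  assumes g_scale: "\<And>r x. x \<in> V \<Longrightarrow> g (vscale (of_real r) x) = r * g x"
    and g_le: "\<And>x. x \<in> V \<Longrightarrow> g x \<le> vnorm x" and x: "x \<in> V"
  shows "\<bar>g x\<bar> \<le> vnorm x"
proof -
  have "- g x = g (vscale (of_real (-1)) x)" using g_scale[OF x, of "-1"] by simp
  also have "\<dots> \<le> vnorm (vscale (-1) x)" using g_le x by simp
  also have "\<dots> = vnorm x" using x by (simp add: vnorm_vscale)
  finally show ?thesis using g_le[OF x] by linarith
qed

lemma cont_functional_complexification:
  fixes g :: "'a \<Rightarrow> real"
  assumes g_add: "\<And>x y. x \<in> V \<Longrightarrow> y \<in> V \<Longrightarrow> g (vadd x y) = g x + g y"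
    and g_scale: "\<And>r x. x \<in> V \<Longrightarrow> g (vscale (of_real r) x) = r * g x"
    and g_le: "\<And>x. x \<in> V \<Longrightarrow> g x \<le> vnorm x"
  shows "cont_functional A (\<lambda>x. of_real (g x) - \<i> * of_real (g (vscale \<i> x)))"
proof -
  have g_complex: "g (vscale c x) = Re c * g x + Im c * g (vscale \<i> x)" if x: "x \<in> V" for c x
  proof -
    have "vscale c x = vscale (of_real (Re c) + of_real (Im c) * \<i>) x"
      by (metis complex_eq mult.commute)
    also have "\<dots> = vadd (vscale (of_real (Re c)) x) (vscale (of_real (Im c)) (vscale \<i> x))"
      using x by (simp add: vscale_left_distrib)
    finally show ?thesis using x by (simp add: g_add g_scale del: vscale_vscale)
  qed
  define f where "f x = complex_of_real (g x) - \<i> * complex_of_real (g (vscale \<i> x))" for x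
  have "f (vscale c x) = c * f x" if x: "x \<in> V" for c x
  proof -
    have "g (vscale \<i> (vscale c x)) = - Im c * g x + Re c * g (vscale \<i> x)"
      using x g_complex[OF x, of "\<i> * c"] by simp
    then show ?thesis
      unfolding f_def using g_complex[OF x, of c] by (simp add: complex_eq_iff algebra_simps)
  qed
  moreover have "f (vadd x y) = f x + f y" if "x \<in> V" "y \<in> V" for x y
    unfolding f_def using that by (simp add: vscale_right_distrib g_add algebra_simps)
  moreover have "cmod (f x) \<le> 2 * vnorm x" if x: "x \<in> V" for x
  proof -
    have "cmod (f x) \<le> \<bar>g x\<bar> + \<bar>g (vscale \<i> x)\<bar>"
      unfolding f_def using norm_triangle_ineq4 by (metis norm_ii norm_mult norm_of_real mult_1)
    also have "\<dots> \<le> vnorm x + vnorm (vscale \<i> x)"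
      using abs_le_vnorm_of_dominated[OF g_scale g_le] x by (simp add: add_mono)
    also have "vnorm (vscale \<i> x) = vnorm x" using x by (simp add: vnorm_vscale)
    finally show ?thesis by simp
  qed
  ultimately show ?thesis unfolding cont_functional_def f_def [symmetric] by blast
qed

lemma dominated_graph_subspace_times_zero:
  assumes S: "S \<subseteq> V" "vzero \<in> S" "\<And>x y. x \<in> S \<Longrightarrow> y \<in> S \<Longrightarrow> vadd x y \<in> S"
      "\<And>c x. x \<in> S \<Longrightarrow> vscale c x \<in> S"
  shows "dominated_graph (S \<times> {0})"
  unfolding dominated_graph_def
proof (intro conjI allI impI)
  show "(vzero, 0) \<in> S \<times> {0}" using S(2) by simp
next
  fix x a assume "(x, a) \<in> S \<times> {0::real}"
  then have "x \<in> V" "a = 0" using S(1) by blast+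
  then show "x \<in> V" "a \<le> vnorm x" by simp_all
next
  fix x a a' assume "(x, a) \<in> S \<times> {0::real}" "(x, a') \<in> S \<times> {0::real}"
  then show "a = a'" by simp
next
  fix x a x' a' assume "(x, a) \<in> S \<times> {0::real}" "(x', a') \<in> S \<times> {0::real}"
  then show "(vadd x x', a + a') \<in> S \<times> {0}" using S(3) by simp
next
  fix x a r assume "(x, a) \<in> S \<times> {0::real}"
  then show "(vscale (of_real r) x, r * a) \<in> S \<times> {0}" using S(4) by simp
qed

lemma distance_scaled_le_vnorm:
  assumes scale_closed: "\<And>c x. x \<in> S \<Longrightarrow> vscale c x \<in> S"
    and x0: "x0 \<in> V" and e: "e > 0" and far: "\<And>m. m \<in> S \<Longrightarrow> e \<le> vnorm (ba_diff A x0 m)"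
    and x: "x \<in> S" "x \<in> V"
  shows "t * e \<le> vnorm (vadd x (vscale (of_real t) x0))"
proof (cases "t > 0")
  case False
  then have "t * e \<le> 0" using e by (simp add: mult_nonpos_nonneg)
  moreover have "0 \<le> vnorm (vadd x (vscale (of_real t) x0))" using x x0 by simp
  ultimately show ?thesis by linarith
next
  case True
  have "e \<le> vnorm (ba_diff A x0 (vscale (of_real (-1 / t)) x))" using far scale_closed x by blast
  also have "ba_diff A x0 (vscale (of_real (-1 / t)) x) = vadd x0 (vscale (of_real (1 / t)) x)"
    using x by (simp add: ba_diff_def)
  finally have "t * e \<le> t * vnorm (vadd x0 (vscale (of_real (1 / t)) x))" using True by simp
  also have "\<dots> = vnorm (vscale (of_real t) (vadd x0 (vscale (of_real (1 / t)) x)))"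
    using True x0 x by (simp add: vnorm_vscale)
  also have "vscale (of_real t) (vadd x0 (vscale (of_real (1 / t)) x)) = vadd x (vscale (of_real t) x0)"
    using True x0 x by (simp add: vscale_right_distrib vadd_commute flip: of_real_mult)
  finally show ?thesis .
qed

lemma separating_functional:
  assumes S: "S \<subseteq> V" "vzero \<in> S" "\<And>x y. x \<in> S \<Longrightarrow> y \<in> S \<Longrightarrow> vadd x y \<in> S"
      "\<And>c x. x \<in> S \<Longrightarrow> vscale c x \<in> S"
    and x0: "x0 \<in> V" and e: "e > 0" and far: "\<And>m. m \<in> S \<Longrightarrow> e \<le> vnorm (ba_diff A x0 m)"
  obtains f where "cont_functional A f" "\<And>m. m \<in> S \<Longrightarrow> f m = 0" "f x0 \<noteq> 0"
proof -
  define G where "G = S \<times> {0::real}"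
  have G: "dominated_graph G"
    unfolding G_def by (rule dominated_graph_subspace_times_zero[OF S])
  have "x0 \<notin> S"
  proof
    assume "x0 \<in> S"
    then have "e \<le> vnorm (ba_diff A x0 x0)" by (rule far)
    then show False using x0 e by (simp add: ba_diff_def vadd_vneg)
  qed
  then have x0_new: "\<forall>a. (x0, a) \<notin> G" unfolding G_def by blast
  have "a + t * e \<le> vnorm (vadd x (vscale (of_real t) x0))" if "(x, a) \<in> G" for x a t
  proof -
    have "x \<in> S" "x \<in> V" "a = 0" using that S(1) unfolding G_def by blast+
    then show ?thesis using distance_scaled_le_vnorm[of S x0 e x t] S(4) x0 e far by simp
  qed
  then have "\<forall>x a t. (x, a) \<in> G \<longrightarrow> a + t * e \<le> vnorm (vadd x (vscale (of_real t) x0))"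
    by blast
  note extended = dominated_graph_extend[OF G x0 x0_new this]
  obtain g where g: "\<And>x y. x \<in> V \<Longrightarrow> y \<in> V \<Longrightarrow> g (vadd x y) = g x + g y"
      "\<And>r x. x \<in> V \<Longrightarrow> g (vscale (of_real r) x) = r * g x" "\<And>x. x \<in> V \<Longrightarrow> g x \<le> vnorm x"
    and g_graph: "\<And>x a. (x, a) \<in> graph_extend G x0 e \<Longrightarrow> g x = a"
    using real_hahn_banach[OF extended] by blast
  show ?thesis
  proof (rule that)
    show "cont_functional A (\<lambda>x. of_real (g x) - \<i> * of_real (g (vscale \<i> x)))"
      using cont_functional_complexification g by blast
    show "of_real (g m) - \<i> * of_real (g (vscale \<i> m)) = 0" if "m \<in> S" for m
    proof -
      have "(m, 0) \<in> graph_extend G x0 e" "(vscale \<i> m, 0) \<in> graph_extend G x0 e"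
        using subset_graph_extend[OF G x0] S(4) that unfolding G_def by blast+
      then show ?thesis using g_graph by simp
    qed
    have "g x0 = e" using g_graph graph_extend_mem[OF G x0] .
    then show "of_real (g x0) - \<i> * of_real (g (vscale \<i> x0)) \<noteq> 0"
      using e by (auto simp: complex_eq_iff)
  qed
qed

end

lemma banach_algebra_mul_closed:
  "banach_algebra A \<Longrightarrow> a \<in> ba_car A \<Longrightarrow> b \<in> ba_car A \<Longrightarrow> ba_mul A a b \<in> ba_car A"
  unfolding banach_algebra_def by auto

lemma prod_span_subset_carrier:
  assumes "banach_algebra A"
  shows "prod_span A \<subseteq> ba_car A"
proof
  fix x assume "x \<in> prod_span A"
  then show "x \<in> ba_car A"
    by induction (use assms in \<open>auto intro: banach_algebra_mul_closed
        simp: banach_algebra_cnormed_space cnormed_space.vadd_closed cnormed_space.vscale_closed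
        cnormed_space.vzero_closed\<close>)
qed

lemma product_annihilating_functional:
  assumes A: "banach_algebra A" and not_dense: "\<not> dense_in A (prod_span A)"
  obtains f x0 where "cont_functional A f"
    "\<And>a b. a \<in> ba_car A \<Longrightarrow> b \<in> ba_car A \<Longrightarrow> f (ba_mul A a b) = 0"
    "x0 \<in> ba_car A" "f x0 \<noteq> 0"
proof -
  interpret cnormed_space A using A by (rule banach_algebra_cnormed_space)
  obtain x0 e where x0: "x0 \<in> V" and e: "e > 0"
    and "\<forall>m\<in>prod_span A. \<not> vnorm (ba_diff A x0 m) < e"
    using not_dense unfolding dense_in_def by blast
  then have far: "\<And>m. m \<in> prod_span A \<Longrightarrow> e \<le> vnorm (ba_diff A x0 m)"
    using linorder_not_less by blast
  obtain f where f: "cont_functional A f" "f x0 \<noteq> 0"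
    and vanishes: "\<And>m. m \<in> prod_span A \<Longrightarrow> f m = 0"
    using separating_functional[OF prod_span_subset_carrier[OF A] prod_span.zero
        prod_span.add prod_span.smul x0 e far] by blast
  show ?thesis
    using vanishes[OF prod_span.prod] by (rule that[OF f(1) _ x0 f(2)])
qed

lemma dual_derivation_product:
  assumes u: "cont_functional A u" and v: "cont_functional A v"
    and leibniz: "\<And>a b x. a \<in> ba_car A \<Longrightarrow> b \<in> ba_car A \<Longrightarrow> x \<in> ba_car A \<Longrightarrow>
      u (ba_mul A a b) * v x = u a * v (ba_mul A b x) + u b * v (ba_mul A x a)"
  shows "dual_derivation A A id (\<lambda>a x. u a * v x)"
proof -
  obtain Ku where Ku: "\<And>x. x \<in> ba_car A \<Longrightarrow> cmod (u x) \<le> Ku * ba_norm A x"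
    using u unfolding cont_functional_def by blast
  obtain Kv where Kv: "\<And>x. x \<in> ba_car A \<Longrightarrow> cmod (v x) \<le> Kv * ba_norm A x"
    using v unfolding cont_functional_def by blast
  have "cmod (u a * v x) \<le> (Ku * Kv) * ba_norm A a * ba_norm A x"
    if "a \<in> ba_car A" "x \<in> ba_car A" for a x
  proof -
    have "cmod (u a * v x) \<le> (Ku * ba_norm A a) * (Kv * ba_norm A x)"
      unfolding norm_mult
      using Ku[of a] Kv[of x] that by (intro mult_mono) (auto intro: order_trans[OF norm_ge_zero])
    then show ?thesis by (simp add: algebra_simps)
  qed
  moreover have "cont_functional A (\<lambda>x. u a * v x)" for a
  proof -
    have "cmod (u a * v x) \<le> (cmod (u a) * Kv) * ba_norm A x" if "x \<in> ba_car A" for x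
      using Kv[OF that] by (simp add: norm_mult mult.assoc mult_left_mono)
    then show ?thesis using v unfolding cont_functional_def by (auto simp: distrib_left)
  qed
  ultimately show ?thesis
    using u leibniz unfolding dual_derivation_def cont_functional_def
    by (auto simp: distrib_right)
qed

lemma cont_hom_id: "cont_hom A A id"
  unfolding cont_hom_def by (auto intro!: exI[of _ 1])

lemma super_weakly_amenable_product_functional:
  assumes A: "banach_algebra A" and swa: "super_weakly_amenable A"
    and u: "cont_functional A u" and v: "cont_functional A v"
    and leibniz: "\<And>a b x. a \<in> ba_car A \<Longrightarrow> b \<in> ba_car A \<Longrightarrow> x \<in> ba_car A \<Longrightarrow>
      u (ba_mul A a b) * v x = u a * v (ba_mul A b x) + u b * v (ba_mul A x a)"
    and a: "a \<in> ba_car A" and b: "b \<in> ba_car A"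
  shows "u a * v b + u b * v a = 0"
  using swa A cont_hom_id dual_derivation_product[OF u v leibniz] a b
  unfolding super_weakly_amenable_def by fastforce

lemma super_weakly_amenable_prod_span_dense:
  assumes A: "banach_algebra A" and swa: "super_weakly_amenable A"
  shows "dense_in A (prod_span A)"
proof (rule ccontr)
  assume "\<not> dense_in A (prod_span A)"
  then obtain f x0 where f: "cont_functional A f"
    and kills: "\<And>a b. a \<in> ba_car A \<Longrightarrow> b \<in> ba_car A \<Longrightarrow> f (ba_mul A a b) = 0"
    and x0: "x0 \<in> ba_car A" "f x0 \<noteq> 0"
    using product_annihilating_functional[OF A] by blast
  have "f x0 * f x0 + f x0 * f x0 = 0"
    using super_weakly_amenable_product_functional[OF A swa f f _ x0(1) x0(1)]
    by (simp add: kills banach_algebra_mul_closed[OF A])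
  with x0(2) show False by simp
qed

lemma super_weakly_amenable_point_derivation_zero:
  assumes A: "banach_algebra A" and swa: "super_weakly_amenable A"
    and \<phi>: "cont_functional A \<phi>"
    and \<phi>_mult: "\<And>a b. a \<in> ba_car A \<Longrightarrow> b \<in> ba_car A \<Longrightarrow> \<phi> (ba_mul A a b) = \<phi> a * \<phi> b"
    and w: "w \<in> ba_car A" "\<phi> w \<noteq> 0"
    and d: "cont_functional A d"
    and d_deriv: "\<And>a b. a \<in> ba_car A \<Longrightarrow> b \<in> ba_car A \<Longrightarrow>
      d (ba_mul A a b) = d a * \<phi> b + \<phi> a * d b"
    and a: "a \<in> ba_car A"
  shows "d a = 0"
proof -
  have antisym: "d a * \<phi> b + d b * \<phi> a = 0" if "a \<in> ba_car A" "b \<in> ba_car A" for a b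
    using super_weakly_amenable_product_functional[OF A swa d \<phi> _ that]
    by (simp add: \<phi>_mult d_deriv algebra_simps)
  have "d w = 0" using antisym[OF w(1) w(1)] w(2) by simp
  then show ?thesis using antisym[OF a w(1)] w(2) by simp
qed

theorem theorem3p2:
  fixes A :: "'a cba"
  assumes "banach_algebra A"
    and "super_weakly_amenable A"
  shows "dense_in A (prod_span A) \<and>
         (\<forall>\<phi> d. cont_functional A \<phi> \<and>
            (\<forall>a\<in>ba_car A. \<forall>b\<in>ba_car A. \<phi> (ba_mul A a b) = \<phi> a * \<phi> b) \<and>
            (\<exists>a\<in>ba_car A. \<phi> a \<noteq> 0) \<and>
            cont_functional A d \<and>
            (\<forall>a\<in>ba_car A. \<forall>b\<in>ba_car A. d (ba_mul A a b) = d a * \<phi> b + \<phi> a * d b)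
            \<longrightarrow> (\<forall>a\<in>ba_car A. d a = 0))"
  using super_weakly_amenable_prod_span_dense[OF assms]
    super_weakly_amenable_point_derivation_zero[OF assms]
  by blast

end
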